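(* Let $\Omega\subset\mathbb{R}^{n+1}$ be a compact convex body with $C^1$ boundary. Fix $X_0\in\partial\Omega$, let $X\in\partial\Omega$ and $\bar X_0,\bar X_1\in\partial\Omega^+(X_0)$, and let $(\bar X_t)_{t\in[0,1]}$ be the $c$-segment with respect to $X_0$ from $\bar X_0$ to $\bar X_1$. Then for all $t\in[0,1]$, $$-c(X,\bar X_t)+c(X_0,\bar X_t)+c(X,\bar X_0)-c(X_0,\bar X_0)\le t\big(-c(X,\bar X_1)+c(X_0,\bar X_1)+c(X,\bar X_0)-c(X_0,\bar X_0)\big).$$
   Context: $c(X,Y)=\frac{|X-Y|^2}{2}$. $\mathcal{N}_\Omega$ is the outward unit normal; $\partial\Omega^+(X_0):=\{X\in\partial\Omega\mid\langle\mathcal{N}_\Omega(X),\mathcal{N}_\Omega(X_0)\rangle>0\}$. Let $P_{X_0}$ be the orthogonal projection of $\mathbb{R}^{n+1}$ onto the tangent hyperplane $\Pi_{X_0}$ to $\partial\Omega$ at $X_0$; $P_{X_0}$ is injective on $\partial\Omega^+(X_0)$ and $\Omega_{X_0}:=P_{X_0}(\partial\Omega^+(X_0))$ is convex. The $c$-segment with respect to $X_0$ from $\bar X_0$ to $\bar X_1$ is the curve $t\mapsto\bar X_t$, where $\bar X_t$ is the unique point of $\partial\Omega^+(X_0)$ with $P_{X_0}(\bar X_t)=(1-t)P_{X_0}(\bar X_0)+tP_{X_0}(\bar X_1)$. *)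

theory Defs
  imports "HOL-Analysis.Analysis"
begin

definition cost :: "'a::euclidean_space \<Rightarrow> 'a \<Rightarrow> real" where
  "cost X Y = (norm (X - Y))\<^sup>2 / 2"

definition convex_body :: "'a::euclidean_space set \<Rightarrow> bool" where
  "convex_body \<Omega> \<longleftrightarrow> compact \<Omega> \<and> convex \<Omega> \<and> interior \<Omega> \<noteq> {}"

definition C1_defining ::
  "'a::euclidean_space set \<Rightarrow> 'a \<Rightarrow> 'a set \<Rightarrow> ('a \<Rightarrow> real) \<Rightarrow> ('a \<Rightarrow> 'a) \<Rightarrow> bool" where
  "C1_defining \<Omega> X U \<phi> g \<longleftrightarrow>
     open U \<and> X \<in> U \<and>
     (\<forall>x\<in>U. (\<phi> has_derivative (\<lambda>h. g x \<bullet> h)) (at x)) \<and>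
     continuous_on U g \<and> (\<forall>x\<in>U. g x \<noteq> 0) \<and>
     \<Omega> \<inter> U = {x\<in>U. \<phi> x \<le> 0}"

definition C1_boundary :: "'a::euclidean_space set \<Rightarrow> bool" where
  "C1_boundary \<Omega> \<longleftrightarrow> (\<forall>X\<in>frontier \<Omega>. \<exists>U \<phi> g. C1_defining \<Omega> X U \<phi> g)"

definition outward_normal :: "'a::euclidean_space set \<Rightarrow> 'a \<Rightarrow> 'a" where
  "outward_normal \<Omega> X =
     (SOME \<nu>. \<exists>U \<phi> g. C1_defining \<Omega> X U \<phi> g \<and> \<nu> = g X /\<^sub>R norm (g X))"

definition bdry_plus :: "'a::euclidean_space set \<Rightarrow> 'a \<Rightarrow> 'a set" where
  "bdry_plus \<Omega> X0 =
     {X \<in> frontier \<Omega>. outward_normal \<Omega> X \<bullet> outward_normal \<Omega> X0 > 0}"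

definition tangent_proj :: "'a::euclidean_space set \<Rightarrow> 'a \<Rightarrow> 'a \<Rightarrow> 'a" where
  "tangent_proj \<Omega> X0 Y =
     Y - ((Y - X0) \<bullet> outward_normal \<Omega> X0) *\<^sub>R outward_normal \<Omega> X0"

definition c_segment :: "'a::euclidean_space set \<Rightarrow> 'a \<Rightarrow> 'a \<Rightarrow> 'a \<Rightarrow> real \<Rightarrow> 'a" where
  "c_segment \<Omega> X0 Y0 Y1 t =
     (THE Y. Y \<in> bdry_plus \<Omega> X0 \<and>
        tangent_proj \<Omega> X0 Y = (1 - t) *\<^sub>R tangent_proj \<Omega> X0 Y0 + t *\<^sub>R tangent_proj \<Omega> X0 Y1)"

end

theory Submission
  imports Defs
begin

text \<open>Since \<open>- c(X, Y) + c(X\<^sub>0, Y) = (X - X\<^sub>0) \<bullet> Y + const\<close> is affine in \<open>Y\<close>, the claim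
  reduces to \<open>(X - X\<^sub>0) \<bullet> (Y\<^sub>t - (1 - t) Y\<^sub>0 - t Y\<^sub>1) \<le> 0\<close>. The point \<open>Y\<^sub>t\<close> lies above the
  chord point \<open>Z = (1 - t) Y\<^sub>0 + t Y\<^sub>1 \<in> \<Omega>\<close> in the direction of the normal \<open>N\<close> at \<open>X\<^sub>0\<close>: walking
  from \<open>Z\<close> in direction \<open>N\<close> one meets the boundary at a point whose normal has positive
  component along \<open>N\<close> (otherwise its supporting hyperplane would also support \<open>\<Omega>\<close> at \<open>Y\<^sub>0\<close> or
  \<open>Y\<^sub>1\<close>, contradicting uniqueness of normals at \<open>C\<^sup>1\<close> points), and by injectivity of the
  projection on \<open>\<partial>\<Omega>\<^sup>+(X\<^sub>0)\<close> that point is \<open>Y\<^sub>t\<close>. Finally \<open>(X - X\<^sub>0) \<bullet> N \<le> 0\<close> because \<open>N\<close>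
  is an outer normal of the convex set \<open>\<Omega>\<close> at \<open>X\<^sub>0\<close>.\<close>

lemma C1_defining_line_deriv:
  assumes "C1_defining \<Omega> Y U \<phi> g"
  shows "((\<lambda>s. \<phi> (Y + s *\<^sub>R d)) has_real_derivative (g Y \<bullet> d)) (at 0)"
proof -
  have "(\<phi> has_derivative (\<lambda>h. g Y \<bullet> h)) (at Y)"
    using assms unfolding C1_defining_def by blast
  moreover have "((\<lambda>s. Y + s *\<^sub>R d) has_derivative (\<lambda>s. s *\<^sub>R d)) (at 0)"
    by (auto intro!: derivative_eq_intros)
  ultimately have "((\<lambda>s. \<phi> (Y + s *\<^sub>R d)) has_derivative (\<lambda>s. g Y \<bullet> (s *\<^sub>R d))) (at 0)"
    using has_derivative_compose[of "\<lambda>s. Y + s *\<^sub>R d"] by fastforce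
  then show ?thesis
    by (simp add: has_field_derivative_def mult.commute[of _ "g Y \<bullet> d"])
qed

lemma C1_defining_eventually_in_nbhd:
  assumes "C1_defining \<Omega> Y U \<phi> g"
  shows "\<forall>\<^sub>F s in at_right 0. Y + s *\<^sub>R d \<in> U"
proof -
  have "((\<lambda>s. Y + s *\<^sub>R d) \<longlongrightarrow> Y) (at_right 0)"
    by (auto intro!: tendsto_eq_intros)
  moreover have "open U" "Y \<in> U"
    using assms unfolding C1_defining_def by auto
  ultimately show ?thesis
    by (rule topological_tendstoD)
qed

lemma C1_defining_mem_iff:
  assumes "C1_defining \<Omega> Y U \<phi> g" "x \<in> U"
  shows "x \<in> \<Omega> \<longleftrightarrow> \<phi> x \<le> 0"
  using assms unfolding C1_defining_def by blast

lemma C1_defining_frontier_eq_0: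
  assumes "closed \<Omega>" "Y \<in> frontier \<Omega>" "C1_defining \<Omega> Y U \<phi> g"
  shows "\<phi> Y = 0"
proof (rule ccontr)
  have U: "open U" "Y \<in> U" and "\<forall>x\<in>U. (\<phi> has_derivative (\<lambda>h. g x \<bullet> h)) (at x)"
    using assms(3) unfolding C1_defining_def by auto
  then have "continuous_on U \<phi>"
    by (auto intro!: continuous_at_imp_continuous_on dest: has_derivative_continuous)
  then have "open (U \<inter> \<phi> -` {..<0})"
    using U by (intro continuous_open_preimage) auto
  moreover have "U \<inter> \<phi> -` {..<0} \<subseteq> \<Omega>"
    using C1_defining_mem_iff[OF assms(3)] by auto
  moreover have "Y \<in> \<Omega>"
    using assms(1,2) frontier_subset_closed by blast
  moreover assume "\<phi> Y \<noteq> 0"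
  ultimately have "Y \<in> interior \<Omega>"
    using C1_defining_mem_iff[OF assms(3) \<open>Y \<in> U\<close>] \<open>Y \<in> U\<close>
    by (intro interiorI[of "U \<inter> \<phi> -` {..<0}"]) auto
  then show False
    using assms(2) by (simp add: frontier_def)
qed

lemma C1_defining_eventually_outside:
  assumes "C1_defining \<Omega> Y U \<phi> g" "\<phi> Y = 0" "g Y \<bullet> d > 0"
  shows "\<forall>\<^sub>F s in at_right 0. Y + s *\<^sub>R d \<notin> \<Omega>"
proof -
  obtain \<delta> where "\<delta> > 0" "\<forall>s>0. s < \<delta> \<longrightarrow> \<phi> (Y + 0 *\<^sub>R d) < \<phi> (Y + (0 + s) *\<^sub>R d)"
    using DERIV_pos_inc_right[OF C1_defining_line_deriv[OF assms(1)] assms(3)] by blast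
  then have "\<forall>\<^sub>F s in at_right 0. \<phi> (Y + s *\<^sub>R d) > 0"
    using assms(2) unfolding eventually_at_right_field by auto
  with C1_defining_eventually_in_nbhd[OF assms(1), of d] show ?thesis
    by eventually_elim (simp add: C1_defining_mem_iff[OF assms(1)])
qed

lemma C1_defining_eventually_inside:
  assumes "C1_defining \<Omega> Y U \<phi> g" "Y \<in> \<Omega>" "g Y \<bullet> d < 0"
  shows "\<forall>\<^sub>F s in at_right 0. Y + s *\<^sub>R d \<in> \<Omega>"
proof -
  have "Y \<in> U"
    using assms(1) unfolding C1_defining_def by blast
  then have "\<phi> Y \<le> 0"
    using C1_defining_mem_iff[OF assms(1)] assms(2) by blast
  moreover obtain \<delta> where "\<delta> > 0" "\<forall>s>0. s < \<delta> \<longrightarrow> \<phi> (Y + 0 *\<^sub>R d) > \<phi> (Y + (0 + s) *\<^sub>R d)"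
    using DERIV_neg_dec_right[OF C1_defining_line_deriv[OF assms(1)] assms(3)] by blast
  ultimately have "\<forall>\<^sub>F s in at_right 0. \<phi> (Y + s *\<^sub>R d) < 0"
    unfolding eventually_at_right_field by (auto intro: order_less_le_trans)
  with C1_defining_eventually_in_nbhd[OF assms(1), of d] show ?thesis
    by eventually_elim (simp add: C1_defining_mem_iff[OF assms(1)])
qed

lemma ex_C1_defining_outward_normal:
  assumes "C1_boundary \<Omega>" "Y \<in> frontier \<Omega>"
  obtains U \<phi> g where "C1_defining \<Omega> Y U \<phi> g" "outward_normal \<Omega> Y = g Y /\<^sub>R norm (g Y)"
proof -
  have "\<exists>\<nu> U \<phi> g. C1_defining \<Omega> Y U \<phi> g \<and> \<nu> = g Y /\<^sub>R norm (g Y)"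
    using assms unfolding C1_boundary_def by blast
  then have "\<exists>U \<phi> g. C1_defining \<Omega> Y U \<phi> g \<and> outward_normal \<Omega> Y = g Y /\<^sub>R norm (g Y)"
    unfolding outward_normal_def by (rule someI_ex)
  then show thesis
    using that by blast
qed

lemma norm_outward_normal:
  assumes "C1_boundary \<Omega>" "Y \<in> frontier \<Omega>"
  shows "norm (outward_normal \<Omega> Y) = 1"
proof -
  obtain U \<phi> g where "C1_defining \<Omega> Y U \<phi> g" "outward_normal \<Omega> Y = g Y /\<^sub>R norm (g Y)"
    using assms by (rule ex_C1_defining_outward_normal)
  moreover have "g Y \<noteq> 0"
    using \<open>C1_defining \<Omega> Y U \<phi> g\<close> unfolding C1_defining_def by blast
  ultimately show ?thesis
    by simp
qed

lemma tangent_proj_add_normal: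
  assumes "norm (outward_normal \<Omega> X0) = 1"
  shows "tangent_proj \<Omega> X0 (Y + b *\<^sub>R outward_normal \<Omega> X0) = tangent_proj \<Omega> X0 Y"
  using assms unfolding tangent_proj_def
  by (simp add: algebra_simps dot_square_norm)

lemma tangent_proj_convex_combination:
  "tangent_proj \<Omega> X0 ((1 - t) *\<^sub>R Y0 + t *\<^sub>R Y1)
     = (1 - t) *\<^sub>R tangent_proj \<Omega> X0 Y0 + t *\<^sub>R tangent_proj \<Omega> X0 Y1"
  unfolding tangent_proj_def by (simp add: algebra_simps)

lemma tangent_proj_eq_imp_normal_offset:
  assumes "tangent_proj \<Omega> X0 Q = tangent_proj \<Omega> X0 Y"
  shows "Q = Y + ((Q - Y) \<bullet> outward_normal \<Omega> X0) *\<^sub>R outward_normal \<Omega> X0"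
  using assms unfolding tangent_proj_def by (simp add: algebra_simps)

lemma frontier_point_on_ray:
  fixes Z v :: "'a::real_normed_vector"
  assumes "bounded S" "Z \<in> S" "v \<noteq> 0"
  obtains b where "b \<ge> 0" "Z + b *\<^sub>R v \<in> frontier S"
proof -
  obtain B where B: "\<forall>x\<in>S. norm x \<le> B"
    using assms(1) bounded_iff by blast
  define R where "R = (B + norm Z + 1) / norm v"
  have "norm Z \<le> B"
    using B assms(2) by blast
  then have pos: "B + norm Z + 1 > 0"
    using norm_ge_zero[of Z] by linarith
  then have "R \<ge> 0"
    unfolding R_def by simp
  have "norm (R *\<^sub>R v) = B + norm Z + 1"
    using pos assms(3) unfolding R_def by simp
  then have "norm (Z + R *\<^sub>R v) > B"
    using norm_triangle_ineq2[of "R *\<^sub>R v" "- Z"] by (simp add: algebra_simps)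
  then have "Z + R *\<^sub>R v \<notin> S"
    using B by force
  then have "closed_segment Z (Z + R *\<^sub>R v) \<inter> frontier S \<noteq> {}"
    using assms(2) by (intro connected_Int_frontier) auto
  then obtain u where "u \<in> {0..1}" "Z + (u * R) *\<^sub>R v \<in> frontier S"
    unfolding closed_segment_def by (auto simp: algebra_simps)
  then show thesis
    using that[of "u * R"] \<open>R \<ge> 0\<close> by simp
qed

locale closed_convex_C1 =
  fixes \<Omega> :: "'a::euclidean_space set"
  assumes convex_\<Omega>: "convex \<Omega>" and closed_\<Omega>: "closed \<Omega>" and C1_boundary_\<Omega>: "C1_boundary \<Omega>"
begin

lemma frontier_subset: "frontier \<Omega> \<subseteq> \<Omega>"
  using closed_\<Omega> by (rule frontier_subset_closed)

lemma outward_normal_supporting: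
  assumes "Y \<in> frontier \<Omega>" "Q \<in> \<Omega>"
  shows "(Q - Y) \<bullet> outward_normal \<Omega> Y \<le> 0"
proof -
  obtain U \<phi> g where D: "C1_defining \<Omega> Y U \<phi> g"
    and normal: "outward_normal \<Omega> Y = g Y /\<^sub>R norm (g Y)"
    using C1_boundary_\<Omega> assms(1) by (rule ex_C1_defining_outward_normal)
  have "g Y \<bullet> (Q - Y) \<le> 0"
  proof (rule ccontr)
    assume "\<not> g Y \<bullet> (Q - Y) \<le> 0"
    then have "\<forall>\<^sub>F s in at_right 0. Y + s *\<^sub>R (Q - Y) \<notin> \<Omega>"
      using C1_defining_eventually_outside[OF D] C1_defining_frontier_eq_0[OF closed_\<Omega> assms(1) D]
      by simp
    moreover have "\<forall>\<^sub>F s in at_right 0. Y + s *\<^sub>R (Q - Y) \<in> \<Omega>"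
    proof -
      have "Y + s *\<^sub>R (Q - Y) \<in> \<Omega>" if "0 < s" "s < 1" for s :: real
      proof -
        have "(1 - s) *\<^sub>R Y + s *\<^sub>R Q \<in> \<Omega>"
          using convex_\<Omega> assms frontier_subset that unfolding convex_alt by auto
        then show ?thesis
          by (simp add: algebra_simps)
      qed
      then show ?thesis
        unfolding eventually_at_right_field by (auto intro!: exI[of _ 1])
    qed
    ultimately have "\<forall>\<^sub>F s in at_right 0. Y + s *\<^sub>R (Q - Y) \<notin> \<Omega> \<and> Y + s *\<^sub>R (Q - Y) \<in> \<Omega>"
      by (rule eventually_conj)
    then show False
      using eventually_happens'[OF trivial_limit_at_right_real] by blast
  qed
  then show ?thesis
    unfolding normal by (simp add: inner_commute mult_nonneg_nonpos)
qed

lemma outward_normal_unique: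
  assumes "Y \<in> frontier \<Omega>" "norm v = 1" and supp: "\<forall>Q\<in>\<Omega>. (Q - Y) \<bullet> v \<le> 0"
  shows "v = outward_normal \<Omega> Y"
proof (rule ccontr)
  assume "v \<noteq> outward_normal \<Omega> Y"
  obtain U \<phi> g where D: "C1_defining \<Omega> Y U \<phi> g"
    and normal: "outward_normal \<Omega> Y = g Y /\<^sub>R norm (g Y)"
    using C1_boundary_\<Omega> assms(1) by (rule ex_C1_defining_outward_normal)
  define \<nu> where "\<nu> = outward_normal \<Omega> Y"
  have "norm \<nu> = 1"
    unfolding \<nu>_def using C1_boundary_\<Omega> assms(1) by (rule norm_outward_normal)
  have "\<nu> \<bullet> v \<le> 1"
    using norm_cauchy_schwarz[of \<nu> v] \<open>norm \<nu> = 1\<close> assms(2) by simp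
  moreover have "\<nu> \<bullet> v \<noteq> 1"
    using norm_cauchy_schwarz_eq[of \<nu> v] \<open>norm \<nu> = 1\<close> assms(2) \<open>v \<noteq> outward_normal \<Omega> Y\<close>
    unfolding \<nu>_def by auto
  ultimately have "\<nu> \<bullet> v < 1"
    by simp
  have "norm (g Y) > 0"
    using D unfolding C1_defining_def by auto
  then have "g Y = norm (g Y) *\<^sub>R \<nu>"
    unfolding \<nu>_def normal by simp
  moreover have "\<nu> \<bullet> \<nu> = 1"
    using \<open>norm \<nu> = 1\<close> by (simp add: dot_square_norm)
  ultimately have "g Y \<bullet> (v - \<nu>) = norm (g Y) * (\<nu> \<bullet> v - 1)"
    by (metis inner_diff_right inner_scaleR_left inner_commute)
  then have "g Y \<bullet> (v - \<nu>) < 0"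
    using \<open>norm (g Y) > 0\<close> \<open>\<nu> \<bullet> v < 1\<close> by (simp add: mult_pos_neg)
  moreover have "Y \<in> \<Omega>"
    using assms(1) frontier_subset by blast
  ultimately have "\<forall>\<^sub>F s in at_right 0. 0 < s \<and> Y + s *\<^sub>R (v - \<nu>) \<in> \<Omega>"
    using eventually_conj[OF eventually_at_right_less C1_defining_eventually_inside[OF D]] by blast
  then obtain s :: real where "0 < s" "Y + s *\<^sub>R (v - \<nu>) \<in> \<Omega>"
    using eventually_happens'[OF trivial_limit_at_right_real] by blast
  then have "(s *\<^sub>R (v - \<nu>)) \<bullet> v \<le> 0"
    using supp by fastforce
  then have "s * (1 - \<nu> \<bullet> v) \<le> 0"
    using assms(2) by (simp add: inner_diff_left inner_diff_right inner_commute dot_square_norm)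
  then show False
    using \<open>0 < s\<close> \<open>\<nu> \<bullet> v < 1\<close> by (simp add: mult_le_0_iff)
qed

lemma bdry_plus_above:
  assumes "Y \<in> bdry_plus \<Omega> X0" "Q \<in> \<Omega>" "tangent_proj \<Omega> X0 Q = tangent_proj \<Omega> X0 Y"
  shows "\<exists>k\<ge>0. Y = Q + k *\<^sub>R outward_normal \<Omega> X0"
proof -
  define N where "N = outward_normal \<Omega> X0"
  define a where "a = (Q - Y) \<bullet> N"
  have QY: "Q - Y = a *\<^sub>R N"
    using tangent_proj_eq_imp_normal_offset[OF assms(3)] unfolding a_def N_def
    by (simp add: algebra_simps)
  have "Y \<in> frontier \<Omega>" and pos: "outward_normal \<Omega> Y \<bullet> N > 0"
    using assms(1) unfolding bdry_plus_def N_def by auto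
  have "(Q - Y) \<bullet> outward_normal \<Omega> Y \<le> 0"
    using \<open>Y \<in> frontier \<Omega>\<close> assms(2) by (rule outward_normal_supporting)
  then have "a \<le> 0"
    using pos unfolding QY by (simp add: inner_commute mult_le_0_iff)
  moreover have "Y = Q + (- a) *\<^sub>R N"
    using QY by (simp add: algebra_simps)
  ultimately show ?thesis
    unfolding N_def by (intro exI[of _ "- a"]) simp
qed

lemma inj_on_tangent_proj_bdry_plus:
  assumes "X0 \<in> frontier \<Omega>"
  shows "inj_on (tangent_proj \<Omega> X0) (bdry_plus \<Omega> X0)"
proof (rule inj_onI)
  fix Y W
  assume Y: "Y \<in> bdry_plus \<Omega> X0" and W: "W \<in> bdry_plus \<Omega> X0"
    and eq: "tangent_proj \<Omega> X0 Y = tangent_proj \<Omega> X0 W"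
  have "Y \<in> \<Omega>" "W \<in> \<Omega>"
    using Y W frontier_subset unfolding bdry_plus_def by auto
  obtain k k' where "k \<ge> 0" "k' \<ge> 0"
    and "Y = W + k *\<^sub>R outward_normal \<Omega> X0" "W = Y + k' *\<^sub>R outward_normal \<Omega> X0"
    using bdry_plus_above[OF Y \<open>W \<in> \<Omega>\<close>] bdry_plus_above[OF W \<open>Y \<in> \<Omega>\<close>] eq by metis
  then have "(k + k') *\<^sub>R outward_normal \<Omega> X0 = 0"
    by (simp add: algebra_simps)
  moreover have "outward_normal \<Omega> X0 \<noteq> 0"
    using norm_outward_normal[OF C1_boundary_\<Omega> assms] by auto
  ultimately have "k = 0"
    using \<open>k \<ge> 0\<close> \<open>k' \<ge> 0\<close> by simp
  then show "Y = W"
    using \<open>Y = W + k *\<^sub>R outward_normal \<Omega> X0\<close> by simp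
qed

lemma bdry_plus_above_chord:
  assumes "Y0 \<in> bdry_plus \<Omega> X0" "Y1 \<in> bdry_plus \<Omega> X0" "t \<in> {0..1}" "b \<ge> 0"
    and "W \<in> frontier \<Omega>" "W = (1 - t) *\<^sub>R Y0 + t *\<^sub>R Y1 + b *\<^sub>R outward_normal \<Omega> X0"
  shows "W \<in> bdry_plus \<Omega> X0"
proof -
  define N where "N = outward_normal \<Omega> X0"
  define \<nu> where "\<nu> = outward_normal \<Omega> W"
  have supp: "(Q - W) \<bullet> \<nu> \<le> 0" if "Q \<in> \<Omega>" for Q
    unfolding \<nu>_def using assms(5) that by (rule outward_normal_supporting)
  have "\<nu> \<bullet> N > 0"
  proof (rule ccontr)
    assume "\<not> \<nu> \<bullet> N > 0"
    have not_touching: "(Y - W) \<bullet> \<nu> < 0" if Y: "Y \<in> bdry_plus \<Omega> X0" for Y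
    proof -
      have "Y \<in> frontier \<Omega>" "outward_normal \<Omega> Y \<bullet> N > 0"
        using Y unfolding bdry_plus_def N_def by auto
      then have "\<nu> \<noteq> outward_normal \<Omega> Y"
        using \<open>\<not> \<nu> \<bullet> N > 0\<close> by auto
      moreover have "norm \<nu> = 1"
        unfolding \<nu>_def using C1_boundary_\<Omega> assms(5) by (rule norm_outward_normal)
      ultimately have "\<not> (\<forall>Q\<in>\<Omega>. (Q - Y) \<bullet> \<nu> \<le> 0)"
        using outward_normal_unique[OF \<open>Y \<in> frontier \<Omega>\<close>] by blast
      then have "(Y - W) \<bullet> \<nu> \<noteq> 0"
        using supp by (auto simp: inner_diff_left)
      moreover have "Y \<in> \<Omega>"
        using \<open>Y \<in> frontier \<Omega>\<close> frontier_subset by blast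
      ultimately show ?thesis
        using supp by force
    qed
    have "(1 - t) *\<^sub>R (Y0 - W) + t *\<^sub>R (Y1 - W) = - b *\<^sub>R N"
      using assms(6) unfolding N_def by (simp add: algebra_simps)
    then have "(1 - t) * ((Y0 - W) \<bullet> \<nu>) + t * ((Y1 - W) \<bullet> \<nu>) = - b * (N \<bullet> \<nu>)"
      by (metis inner_add_left inner_scaleR_left)
    also have "\<dots> \<ge> 0"
      using \<open>\<not> \<nu> \<bullet> N > 0\<close> assms(4) by (simp add: inner_commute mult_nonneg_nonpos)
    moreover have "(1 - t) * ((Y0 - W) \<bullet> \<nu>) + t * ((Y1 - W) \<bullet> \<nu>) < 0"
      using not_touching[OF assms(1)] not_touching[OF assms(2)] assms(3)
      by (intro convex_bound_lt) auto
    ultimately show False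
      by simp
  qed
  then show ?thesis
    using assms(5) unfolding bdry_plus_def \<nu>_def N_def by simp
qed

lemma c_segment_above_chord:
  assumes "bounded \<Omega>" "X0 \<in> frontier \<Omega>"
    and "Y0 \<in> bdry_plus \<Omega> X0" "Y1 \<in> bdry_plus \<Omega> X0" "t \<in> {0..1}"
  shows "\<exists>k\<ge>0. c_segment \<Omega> X0 Y0 Y1 t = (1 - t) *\<^sub>R Y0 + t *\<^sub>R Y1 + k *\<^sub>R outward_normal \<Omega> X0"
proof -
  define N where "N = outward_normal \<Omega> X0"
  define P where "P = tangent_proj \<Omega> X0"
  define Z where "Z = (1 - t) *\<^sub>R Y0 + t *\<^sub>R Y1"
  have "norm N = 1"
    unfolding N_def using C1_boundary_\<Omega> assms(2) by (rule norm_outward_normal)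
  have "Y0 \<in> \<Omega>" "Y1 \<in> \<Omega>"
    using assms(3,4) frontier_subset unfolding bdry_plus_def by auto
  then have "Z \<in> \<Omega>"
    using convex_\<Omega> assms(5) unfolding Z_def convex_alt by simp
  moreover have "N \<noteq> 0"
    using \<open>norm N = 1\<close> by auto
  ultimately obtain b where "b \<ge> 0" and W: "Z + b *\<^sub>R N \<in> frontier \<Omega>"
    using frontier_point_on_ray[OF assms(1)] by blast
  have W_bdry_plus: "Z + b *\<^sub>R N \<in> bdry_plus \<Omega> X0"
    by (rule bdry_plus_above_chord[OF assms(3-5) \<open>b \<ge> 0\<close> W]) (simp add: Z_def N_def)
  have "P (Z + b *\<^sub>R N) = P Z"
    using \<open>norm N = 1\<close> unfolding P_def N_def by (rule tangent_proj_add_normal)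
  also have "\<dots> = (1 - t) *\<^sub>R P Y0 + t *\<^sub>R P Y1"
    unfolding P_def Z_def by (rule tangent_proj_convex_combination)
  finally have W_proj: "P (Z + b *\<^sub>R N) = (1 - t) *\<^sub>R P Y0 + t *\<^sub>R P Y1" .
  have "c_segment \<Omega> X0 Y0 Y1 t = Z + b *\<^sub>R N"
    unfolding c_segment_def
  proof (rule the_equality)
    show "Z + b *\<^sub>R N \<in> bdry_plus \<Omega> X0 \<and> tangent_proj \<Omega> X0 (Z + b *\<^sub>R N)
        = (1 - t) *\<^sub>R tangent_proj \<Omega> X0 Y0 + t *\<^sub>R tangent_proj \<Omega> X0 Y1"
      using W_bdry_plus W_proj unfolding P_def by blast
  next
    fix Y
    assume "Y \<in> bdry_plus \<Omega> X0 \<and> tangent_proj \<Omega> X0 Y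
        = (1 - t) *\<^sub>R tangent_proj \<Omega> X0 Y0 + t *\<^sub>R tangent_proj \<Omega> X0 Y1"
    then show "Y = Z + b *\<^sub>R N"
      using inj_onD[OF inj_on_tangent_proj_bdry_plus[OF assms(2)] _ _ W_bdry_plus] W_proj
      unfolding P_def by simp
  qed
  then show ?thesis
    using \<open>b \<ge> 0\<close> unfolding Z_def N_def by blast
qed

end

lemma cost_difference:
  "cost X0 Y - cost X Y = (X0 \<bullet> X0 - X \<bullet> X) / 2 + (X - X0) \<bullet> Y"
  unfolding cost_def power2_norm_eq_inner
  by (simp add: inner_diff_left inner_diff_right inner_commute algebra_simps) (simp add: field_simps)

lemma cost_increment_above_chord:
  fixes X X0 Y0 Y1 N :: "'a::euclidean_space"
  assumes "k \<ge> 0" "Yt = (1 - t) *\<^sub>R Y0 + t *\<^sub>R Y1 + k *\<^sub>R N" "(X - X0) \<bullet> N \<le> 0"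
  shows "- cost X Yt + cost X0 Yt + cost X Y0 - cost X0 Y0
           \<le> t * (- cost X Y1 + cost X0 Y1 + cost X Y0 - cost X0 Y0)"
proof -
  have "- cost X Yt + cost X0 Yt + cost X Y0 - cost X0 Y0 = (X - X0) \<bullet> (Yt - Y0)"
    using cost_difference[of X0 Yt X] cost_difference[of X0 Y0 X] by (simp add: inner_diff_right)
  also have "\<dots> = t * ((X - X0) \<bullet> (Y1 - Y0)) + k * ((X - X0) \<bullet> N)"
    unfolding assms(2) by (simp add: algebra_simps inner_add_right inner_diff_right)
  also have "\<dots> \<le> t * ((X - X0) \<bullet> (Y1 - Y0))"
    using mult_nonneg_nonpos[OF assms(1,3)] by simp
  also have "(X - X0) \<bullet> (Y1 - Y0) = - cost X Y1 + cost X0 Y1 + cost X Y0 - cost X0 Y0"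
    using cost_difference[of X0 Y1 X] cost_difference[of X0 Y0 X] by (simp add: inner_diff_right)
  finally show ?thesis .
qed

theorem proposition3p4:
  fixes \<Omega> :: "'a::euclidean_space set" and X0 X Y0 Y1 :: 'a and t :: real
  assumes "convex_body \<Omega>" and "C1_boundary \<Omega>"
    and "X0 \<in> frontier \<Omega>" and "X \<in> frontier \<Omega>"
    and "Y0 \<in> bdry_plus \<Omega> X0" and "Y1 \<in> bdry_plus \<Omega> X0"
    and "t \<in> {0..1}"
  shows "- cost X (c_segment \<Omega> X0 Y0 Y1 t) + cost X0 (c_segment \<Omega> X0 Y0 Y1 t)
           + cost X Y0 - cost X0 Y0
         \<le> t * (- cost X Y1 + cost X0 Y1 + cost X Y0 - cost X0 Y0)"
proof -
  interpret closed_convex_C1 \<Omega>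
    using assms(1,2) by unfold_locales (auto simp: convex_body_def compact_imp_closed)
  have "bounded \<Omega>"
    using assms(1) by (simp add: convex_body_def compact_imp_bounded)
  then obtain k where "k \<ge> 0"
    and "c_segment \<Omega> X0 Y0 Y1 t = (1 - t) *\<^sub>R Y0 + t *\<^sub>R Y1 + k *\<^sub>R outward_normal \<Omega> X0"
    using c_segment_above_chord assms(3,5-7) by blast
  moreover have "(X - X0) \<bullet> outward_normal \<Omega> X0 \<le> 0"
    using outward_normal_supporting assms(3,4) frontier_subset by blast
  ultimately show ?thesis
    by (rule cost_increment_above_chord)
qed

end
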